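(* Fix $c>0$, $\lambda>1$ and one of the six models. For every $N$ and every $1\le N_1,N_2\le N-1$ with $N_1+N_2=N$, $$\mathbb{E}\big[\log Z(\mathbb{G}(N,\lfloor cN\rfloor))\big]\ge\mathbb{E}\big[\log Z(\mathbb{G}(N_1,\mathcal{M}_1))\big]+\mathbb{E}\big[\log Z(\mathbb{G}(N_2,\mathcal{M}_2))\big],$$ where $\mathcal{M}_1\sim\mathrm{Bi}(\lfloor cN\rfloor,N_1/N)$ and $\mathcal{M}_2=\lfloor cN\rfloor-\mathcal{M}_1\sim\mathrm{Bi}(\lfloor cN\rfloor,N_2/N)$.
   Context: Let $K\ge2$, $\chi=\{0,\dots,q-1\}$. $\mathbb{G}(n,m)$ on an $n$-element node set $V$: $m$ directed hyperedges chosen independently and uniformly from $V^K$. For a hypergraph $G=(V,E)$ with node potentials $H_i$ and edge potentials $H_e:\chi^K\to\mathbb{R}\cup\{-\infty\}$, $H(x)=\sum_iH_i(x_i)+\sum_{e\in E}H_e(x_e)$ and $Z(G)=\sum_{x\in\chi^V}\lambda^{H(x)}$, $\lambda^{-\infty}=0$. Models: Independent set ($K=2,q=2$, $H_i(1)=1,H_i(0)=0$, $H_e(1,1)=-\infty$, else $0$); MAX-CUT ($K=2,q=2$, $H_i\equiv0$, $H_e(x,y)=\mathbf 1[x\ne y]$); anti-ferromagnetic Ising ($K=2,q=2$, fixed $\beta>0,B\in\mathbb{R}$, $H_i(0)=-B,H_i(1)=B$, $H_e(x,y)=-\beta$ if $x=y$, $\beta$ otherwise); $q$-Coloring ($K=2$,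 $H_i\equiv0$, $H_e(x,y)=\mathbf 1[x\ne y]$); K-SAT ($q=2$, $H_i\equiv0$, independent uniform $a_e\in\{0,1\}^K$, $H_e(a_e)=0$, $1$ otherwise); NAE-K-SAT ($H_e(a_e)=H_e(\mathbf1-a_e)=0$, $1$ otherwise). $\mathrm{Bi}(n,\theta)$ is the binomial distribution. *)

theory Defs
  imports "HOL-Probability.Probability"
begin

text \<open>The six models. Parameters: Ising beta B; q-Coloring q; K-SAT K; NAE-K-SAT K.\<close>
datatype model = IndSet | MaxCut | Ising real real | Coloring nat | KSAT nat | NAESAT nat

fun mK :: "model \<Rightarrow> nat" where
  "mK (KSAT k) = k" | "mK (NAESAT k) = k" | "mK _ = 2"

fun mq :: "model \<Rightarrow> nat" where
  "mq (Coloring q) = q" | "mq _ = 2"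

fun valid_model :: "model \<Rightarrow> bool" where
  "valid_model (Ising \<beta> B) = (\<beta> > 0)"
| "valid_model (Coloring q) = (q \<ge> 2)"
| "valid_model (KSAT k) = (k \<ge> 2)"
| "valid_model (NAESAT k) = (k \<ge> 2)"
| "valid_model _ = True"

fun node_pot :: "model \<Rightarrow> nat \<Rightarrow> ereal" where
  "node_pot IndSet s = (if s = 1 then 1 else 0)"
| "node_pot (Ising \<beta> B) s = (if s = 0 then ereal (-B) else ereal B)"
| "node_pot _ s = 0"

text \<open>Random edge labels: the signs a_e \<in> {0,1}^K for (NAE-)K-SAT; a single dummy
  label otherwise.\<close>
fun labels :: "model \<Rightarrow> nat list set" where
  "labels (KSAT k) = {a. length a = k \<and> set a \<subseteq> {0,1}}"
| "labels (NAESAT k) = {a. length a = k \<and> set a \<subseteq> {0,1}}"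
| "labels _ = {[]}"

fun edge_pot :: "model \<Rightarrow> nat list \<Rightarrow> nat list \<Rightarrow> ereal" where
  "edge_pot IndSet a xs = (if xs = [1,1] then -\<infinity> else 0)"
| "edge_pot MaxCut a xs = (if xs ! 0 \<noteq> xs ! 1 then 1 else 0)"
| "edge_pot (Ising \<beta> B) a xs = (if xs ! 0 = xs ! 1 then ereal (-\<beta>) else ereal \<beta>)"
| "edge_pot (Coloring q) a xs = (if xs ! 0 \<noteq> xs ! 1 then 1 else 0)"
| "edge_pot (KSAT k) a xs = (if xs = a then 0 else 1)"
| "edge_pot (NAESAT k) a xs = (if xs = a \<or> xs = map (\<lambda>b. 1 - b) a then 0 else 1)"

definition lampow :: "real \<Rightarrow> ereal \<Rightarrow> real" where
  "lampow lam h = (if h = -\<infinity> then 0 else lam powr (real_of_ereal h))"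

text \<open>A directed hyperedge on V = {0..<n}: a tuple in V^K together with its random label.\<close>
definition edges :: "model \<Rightarrow> nat \<Rightarrow> (nat list \<times> nat list) set" where
  "edges M n = {e. length e = mK M \<and> set e \<subseteq> {0..<n}} \<times> labels M"

definition hamiltonian :: "model \<Rightarrow> nat \<Rightarrow> (nat list \<times> nat list) list \<Rightarrow> (nat \<Rightarrow> nat) \<Rightarrow> ereal" where
  "hamiltonian M n G x =
     (\<Sum>i<n. node_pot M (x i)) + sum_list (map (\<lambda>(e, a). edge_pot M a (map x e)) G)"

definition partition_fn :: "model \<Rightarrow> real \<Rightarrow> nat \<Rightarrow> (nat list \<times> nat list) list \<Rightarrow> real" where
  "partition_fn M lam n G =
     (\<Sum>x \<in> {0..<n} \<rightarrow>\<^sub>E {0..<mq M}. lampow lam (hamiltonian M n G x))"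

text \<open>G(n,m): m hyperedges (with their labels) chosen independently and uniformly,
  i.e. a uniformly random length-m sequence of edges.\<close>
definition rand_graph :: "model \<Rightarrow> nat \<Rightarrow> nat \<Rightarrow> (nat list \<times> nat list) list pmf" where
  "rand_graph M n m = pmf_of_set {G. length G = m \<and> set G \<subseteq> edges M n}"

definition ElogZ :: "model \<Rightarrow> real \<Rightarrow> nat \<Rightarrow> nat \<Rightarrow> real" where
  "ElogZ M lam n m = measure_pmf.expectation (rand_graph M n m) (\<lambda>G. ln (partition_fn M lam n G))"

end

theory Submission
  imports Defs
begin

text \<open>The edges of the disjoint union of \<open>\<G>(N1, \<M>1)\<close> and \<open>\<G>(N2, \<M>2)\<close> are independent,
  each a uniform edge inside a block chosen with probability proportional to its size. We
  replace them one at a time by uniform edges of \<open>\<G>(N, m)\<close> and show that \<open>\<bbbE> log Z\<close> never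
  decreases. Adding an edge \<open>s\<close> to \<open>G\<close> multiplies \<open>Z\<close> by \<open>C (1 - d p(s))\<close>, where \<open>p(s)\<close> is the
  Gibbs probability that \<open>s\<close> is violated and \<open>0 \<le> d \<le> 1\<close>, so the gain is
  \<open>log C - \<Sum>\<^sub>n d\<^sup>n p(s)\<^sup>n / n\<close>. The \<open>n\<close>-th moment of \<open>p(s)\<close> is the probability that \<open>n\<close>
  independent replicas all violate \<open>s\<close>; in each of the six models it is a nonnegative mixture of
  terms \<open>(average of \<phi> over the endpoints of s)\<^sup>K\<close>, so by convexity of \<open>x\<^sup>K\<close> it is larger
  for the block edge than for a uniform edge.\<close>

section \<open>Iterated weighted sums\<close>

text \<open>\<open>seq_sum D w n F\<close> is the sum of \<open>w s\<^sub>1 \<cdots> w s\<^sub>n \<cdot> F [s\<^sub>1, \<dots>, s\<^sub>n]\<close> over \<open>D\<^sup>n\<close>: the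
  expectation of \<open>F\<close> over \<open>n\<close> independent draws when \<open>w\<close> is a probability on \<open>D\<close>.\<close>
fun seq_sum :: "'a set \<Rightarrow> ('a \<Rightarrow> real) \<Rightarrow> nat \<Rightarrow> ('a list \<Rightarrow> real) \<Rightarrow> real" where
  "seq_sum D w 0 F = F []"
| "seq_sum D w (Suc n) F = (\<Sum>e\<in>D. w e * seq_sum D w n (\<lambda>ss. F (e # ss)))"

lemma seq_sum_cong:
  "(\<And>ss. set ss \<subseteq> D \<Longrightarrow> length ss = n \<Longrightarrow> F ss = G ss) \<Longrightarrow> seq_sum D w n F = seq_sum D w n G"
proof (induction n arbitrary: F G)
  case (Suc n)
  show ?case unfolding seq_sum.simps
    by (rule sum.cong[OF refl], rule arg_cong[where f="\<lambda>z. _ * z"], rule Suc.IH) (auto intro!: Suc.prems)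
qed simp

lemma seq_sum_mono:
  assumes "\<And>e. e \<in> D \<Longrightarrow> w e \<ge> 0"
  shows "(\<And>ss. set ss \<subseteq> D \<Longrightarrow> length ss = n \<Longrightarrow> F ss \<le> G ss) \<Longrightarrow> seq_sum D w n F \<le> seq_sum D w n G"
proof (induction n arbitrary: F G)
  case (Suc n)
  show ?case unfolding seq_sum.simps
    by (rule sum_mono, rule mult_left_mono, rule Suc.IH) (auto intro!: Suc.prems assms)
qed simp

lemma seq_sum_add: "seq_sum D w n (\<lambda>ss. F ss + G ss) = seq_sum D w n F + seq_sum D w n G"
  by (induction n arbitrary: F G) (simp_all add: sum.distrib distrib_left)

lemma seq_sum_cmult: "seq_sum D w n (\<lambda>ss. c * F ss) = c * seq_sum D w n F"
  by (induction n arbitrary: F) (simp_all add: sum_distrib_left mult.left_commute)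

lemma seq_sum_const: "seq_sum D w n (\<lambda>ss. c) = c * (sum w D) ^ n"
  by (induction n) (simp_all add: sum_distrib_left sum_distrib_right mult_ac)

lemma seq_sum_sum: "finite I \<Longrightarrow> seq_sum D w n (\<lambda>ss. \<Sum>i\<in>I. F i ss) = (\<Sum>i\<in>I. seq_sum D w n (F i))"
  by (induction I rule: finite_induct) (simp_all add: seq_sum_const seq_sum_add)

lemma seq_sum_reindex:
  "inj_on f D \<Longrightarrow> seq_sum (f ` D) w n F = seq_sum D (w \<circ> f) n (\<lambda>ss. F (map f ss))"
  by (induction n arbitrary: F) (simp_all add: sum.reindex)

lemma sum_lists_length_Suc:
  "(\<Sum>xs\<in>{xs. set xs \<subseteq> D \<and> length xs = Suc n}. F xs)
     = (\<Sum>e\<in>D. \<Sum>xs\<in>{xs. set xs \<subseteq> D \<and> length xs = n}. F (e # xs))"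
proof -
  have "inj_on (\<lambda>(xs, e). e # xs) ({xs. set xs \<subseteq> D \<and> length xs = n} \<times> D)"
    by (auto simp: inj_on_def)
  then have "(\<Sum>xs\<in>{xs. set xs \<subseteq> D \<and> length xs = Suc n}. F xs)
      = (\<Sum>(xs, e)\<in>{xs. set xs \<subseteq> D \<and> length xs = n} \<times> D. F (e # xs))"
    unfolding lists_length_Suc_eq by (subst sum.reindex) (simp_all add: case_prod_unfold)
  then show ?thesis
    by (simp add: sum.cartesian_product[symmetric]) (rule sum.swap)
qed

lemma seq_sum_uniform:
  "seq_sum D (\<lambda>_. 1 / real (card D)) n F
     = (\<Sum>G\<in>{xs. set xs \<subseteq> D \<and> length xs = n}. F G) / real (card D) ^ n"
proof (induction n arbitrary: F)
  case 0
  have "{xs. set xs \<subseteq> D \<and> length xs = 0} = {[]}" by auto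
  then show ?case by simp
next
  case (Suc n)
  show ?case
    by (simp add: Suc sum_lists_length_Suc sum_divide_distrib[symmetric] sum_distrib_left)
qed

lemma sum_choose_Suc_split:
  fixes f :: "nat \<Rightarrow> nat \<Rightarrow> real"
  shows "(\<Sum>k\<le>Suc m. real (Suc m choose k) * f k (Suc m - k))
    = (\<Sum>k\<le>m. real (m choose k) * f (Suc k) (m - k)) + (\<Sum>k\<le>m. real (m choose k) * f k (Suc (m - k)))"
proof -
  have "(\<Sum>k\<le>Suc m. real (Suc m choose k) * f k (Suc m - k))
      = (\<Sum>k\<le>m. real (m choose k) * f (Suc k) (m - k))
      + (f 0 (Suc m) + (\<Sum>k\<le>m. real (m choose Suc k) * f (Suc k) (m - k)))"
    by (subst sum.atMost_Suc_shift) (simp add: distrib_right sum.distrib)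
  also have "f 0 (Suc m) + (\<Sum>k\<le>m. real (m choose Suc k) * f (Suc k) (m - k))
      = (\<Sum>k\<le>Suc m. real (m choose k) * f k (Suc m - k))"
    by (subst sum.atMost_Suc_shift) simp
  also have "\<dots> = (\<Sum>k\<le>m. real (m choose k) * f k (Suc (m - k)))"
    by (simp add: Suc_diff_le)
  finally show ?thesis .
qed

text \<open>Drawing each of \<open>m\<close> items from \<open>A\<close> with probability \<open>pa\<close> and from \<open>B\<close> with probability
  \<open>pb\<close> is the same as first drawing the binomial number \<open>k\<close> of items from \<open>A\<close>.\<close>
lemma seq_sum_split_binomial:
  assumes disj: "A \<inter> B = {}" and fin: "finite A" "finite B"
  shows "seq_sum (A \<union> B) (\<lambda>e. if e \<in> A then pa * wa e else pb * wb e) m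
            (\<lambda>ss. H (filter (\<lambda>e. e \<in> A) ss) (filter (\<lambda>e. e \<notin> A) ss))
   = (\<Sum>k\<le>m. real (m choose k) * (pa^k * pb^(m-k) * seq_sum A wa k (\<lambda>G1. seq_sum B wb (m-k) (H G1))))"
proof (induction m arbitrary: H)
  case (Suc m)
  let ?w = "\<lambda>e. if e \<in> A then pa * wa e else pb * wb e"
  define T where "T H k j = seq_sum A wa k (\<lambda>G1. seq_sum B wb j (H G1))" for H k j
  have IH: "seq_sum (A \<union> B) ?w m (\<lambda>ss. H' (filter (\<lambda>e. e \<in> A) ss) (filter (\<lambda>e. e \<notin> A) ss))
       = (\<Sum>k\<le>m. real (m choose k) * (pa^k * pb^(m-k) * T H' k (m-k)))" for H'
    unfolding T_def by (rule Suc.IH)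
  have "seq_sum (A \<union> B) ?w (Suc m) (\<lambda>ss. H (filter (\<lambda>e. e \<in> A) ss) (filter (\<lambda>e. e \<notin> A) ss))
     = (\<Sum>e\<in>A. pa * wa e * (\<Sum>k\<le>m. real (m choose k) * (pa^k * pb^(m-k) * T (\<lambda>G1. H (e # G1)) k (m-k))))
     + (\<Sum>e\<in>B. pb * wb e * (\<Sum>k\<le>m. real (m choose k) * (pa^k * pb^(m-k) * T (\<lambda>G1 G2. H G1 (e # G2)) k (m-k))))"
    using disj fin by (simp add: sum.union_disjoint IH[symmetric]) (rule sum.cong, auto)
  also have "(\<Sum>e\<in>A. pa * wa e * (\<Sum>k\<le>m. real (m choose k) * (pa^k * pb^(m-k) * T (\<lambda>G1. H (e # G1)) k (m-k))))
      = (\<Sum>k\<le>m. real (m choose k) * (pa^Suc k * pb^(m-k) * T H (Suc k) (m-k)))"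
    unfolding T_def seq_sum.simps
    by (simp add: sum_distrib_left sum_distrib_right mult_ac) (rule sum.swap)
  also have "(\<Sum>e\<in>B. pb * wb e * (\<Sum>k\<le>m. real (m choose k) * (pa^k * pb^(m-k) * T (\<lambda>G1 G2. H G1 (e # G2)) k (m-k))))
      = (\<Sum>k\<le>m. real (m choose k) * (pa^k * pb^Suc (m-k) * T H k (Suc (m-k))))"
  proof -
    have "T H k (Suc j) = (\<Sum>e\<in>B. wb e * T (\<lambda>G1 G2. H G1 (e # G2)) k j)" for k j
      unfolding T_def seq_sum.simps by (simp add: seq_sum_sum[OF fin(2)] seq_sum_cmult)
    then show ?thesis
      by (simp add: sum_distrib_left sum_distrib_right mult_ac) (rule sum.swap)
  qed
  finally show ?case
    using sum_choose_Suc_split[of m "\<lambda>k j. pa^k * pb^j * T H k j"] unfolding T_def by simp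
qed simp

text \<open>Interpolate by replacing the draws from \<open>D'\<close> one at a time by draws from \<open>D\<close>.\<close>
lemma seq_sum_exchange_mono:
  assumes fin: "finite D" "finite D'"
    and w: "\<And>e. e \<in> D \<Longrightarrow> w e \<ge> 0" and w': "\<And>e. e \<in> D' \<Longrightarrow> w' e \<ge> 0"
    and rotate: "\<And>xs s ys. F (xs @ s # ys) = F (s # xs @ ys)"
    and exchange: "\<And>L. set L \<subseteq> D \<union> D' \<Longrightarrow> (\<Sum>s\<in>D'. w' s * F (s # L)) \<le> (\<Sum>s\<in>D. w s * F (s # L))"
  shows "seq_sum D' w' m F \<le> seq_sum D w m F"
proof -
  define I where "I r = seq_sum D w r (\<lambda>ws. seq_sum D' w' (m - r) (\<lambda>ss. F (ws @ ss)))" for r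
  have step: "I r \<le> I (Suc r)" if "r < m" for r
  proof -
    obtain k where k: "m - r = Suc k" "m - Suc r = k" using \<open>r < m\<close> by (metis Suc_diff_Suc)
    have "I r = seq_sum D w r (\<lambda>ws. seq_sum D' w' k (\<lambda>ss. \<Sum>s\<in>D'. w' s * F (ws @ s # ss)))"
      unfolding I_def k using fin by (simp add: seq_sum_sum seq_sum_cmult)
    also have "\<dots> \<le> seq_sum D w r (\<lambda>ws. seq_sum D' w' k (\<lambda>ss. \<Sum>s\<in>D. w s * F (s # ws @ ss)))"
    proof (intro seq_sum_mono w w')
      fix ws ss assume "set ws \<subseteq> D" "set ss \<subseteq> D'"
      then show "(\<Sum>s\<in>D'. w' s * F (ws @ s # ss)) \<le> (\<Sum>s\<in>D. w s * F (s # ws @ ss))"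
        unfolding rotate by (intro exchange) auto
    qed
    also have "\<dots> = I (Suc r)"
      unfolding I_def k using fin by (simp add: seq_sum_sum seq_sum_cmult)
    finally show ?thesis .
  qed
  have "I 0 \<le> I j" if "j \<le> m" for j
    using that
  proof (induction j)
    case (Suc j)
    then show ?case using step[of j] by linarith
  qed simp
  from this[of m] show ?thesis unfolding I_def by simp
qed

section \<open>Gibbs weights\<close>

fun node_val :: "model \<Rightarrow> nat \<Rightarrow> real" where
  "node_val IndSet s = (if s = 1 then 1 else 0)"
| "node_val (Ising \<beta> B) s = (if s = 0 then -B else B)"
| "node_val _ s = 0"

fun violated :: "model \<Rightarrow> nat list \<Rightarrow> nat list \<Rightarrow> real" where
  "violated IndSet a xs = of_bool (xs = [1,1])"
| "violated (KSAT k) a xs = of_bool (xs = a)"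
| "violated (NAESAT k) a xs = of_bool (xs = a \<or> xs = map (\<lambda>b. 1 - b) a)"
| "violated _ a xs = of_bool (xs ! 0 = xs ! 1)"

fun edge_scale :: "model \<Rightarrow> real \<Rightarrow> real" where
  "edge_scale IndSet lam = 1"
| "edge_scale (Ising \<beta> B) lam = lam powr \<beta>"
| "edge_scale _ lam = lam"

fun edge_damping :: "model \<Rightarrow> real \<Rightarrow> real" where
  "edge_damping IndSet lam = 1"
| "edge_damping (Ising \<beta> B) lam = 1 - lam powr (-2*\<beta>)"
| "edge_damping _ lam = 1 - 1 / lam"

text \<open>In all six models the edge factor \<open>\<lambda>^H\<^sub>e\<close> has the form \<open>C (1 - d \<cdot> 1[violated])\<close>
  with \<open>C > 0\<close> and \<open>0 \<le> d \<le> 1\<close>.\<close>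
definition edge_factor :: "model \<Rightarrow> real \<Rightarrow> nat list \<Rightarrow> nat list \<Rightarrow> real" where
  "edge_factor M lam a xs = edge_scale M lam * (1 - edge_damping M lam * violated M a xs)"

definition gibbs_weight ::
    "model \<Rightarrow> real \<Rightarrow> nat \<Rightarrow> (nat list \<times> nat list) list \<Rightarrow> (nat \<Rightarrow> nat) \<Rightarrow> real" where
  "gibbs_weight M lam n G x =
     lam powr (\<Sum>i<n. node_val M (x i)) * prod_list (map (\<lambda>(e,a). edge_factor M lam a (map x e)) G)"

definition configs :: "model \<Rightarrow> nat \<Rightarrow> (nat \<Rightarrow> nat) set" where
  "configs M n = {0..<n} \<rightarrow>\<^sub>E {0..<mq M}"

lemma finite_configs: "finite (configs M n)"
  unfolding configs_def by (simp add: finite_PiE)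

lemma violated_cases: "violated M a xs = 0 \<or> violated M a xs = 1"
  by (cases M) auto

lemma violated_nonneg: "violated M a xs \<ge> 0" and violated_le_1: "violated M a xs \<le> 1"
  using violated_cases[of M a xs] by auto

lemma edge_scale_pos: "lam > 1 \<Longrightarrow> edge_scale M lam > 0"
  by (cases M) auto

lemma edge_damping_nonneg: "valid_model M \<Longrightarrow> lam > 1 \<Longrightarrow> edge_damping M lam \<ge> 0"
  by (cases M) (auto simp: powr_minus field_simps ge_one_powr_ge_zero)

lemma edge_damping_le_1: "lam > 1 \<Longrightarrow> edge_damping M lam \<le> 1"
  by (cases M) auto

lemma edge_damping_less_1: "lam > 1 \<Longrightarrow> M \<noteq> IndSet \<Longrightarrow> edge_damping M lam < 1"
  by (cases M) auto

lemma edge_factor_nonneg: "valid_model M \<Longrightarrow> lam > 1 \<Longrightarrow> edge_factor M lam a xs \<ge> 0"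
  unfolding edge_factor_def
  using edge_scale_pos[of lam M] edge_damping_le_1[of lam M] edge_damping_nonneg[of M lam]
    violated_le_1[of M a xs] violated_nonneg[of M a xs]
  by (intro mult_nonneg_nonneg) (auto intro!: mult_le_one)

lemma edge_factor_pos:
  assumes "valid_model M" "lam > 1" "M \<noteq> IndSet \<or> violated M a xs = 0"
  shows "edge_factor M lam a xs > 0"
proof -
  consider "M \<noteq> IndSet" | "violated M a xs = 0" using assms(3) by blast
  then have "edge_damping M lam * violated M a xs < 1"
  proof cases
    case 1
    then show ?thesis using edge_damping_less_1[OF assms(2)] violated_cases[of M a xs] by auto
  qed simp
  then show ?thesis unfolding edge_factor_def using edge_scale_pos[OF assms(2)] by simp
qed

lemma lampow_edge_pot: "lam > 1 \<Longrightarrow> lampow lam (edge_pot M a xs) = edge_factor M lam a xs"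
  by (cases M) (auto simp: lampow_def edge_factor_def powr_minus field_simps powr_add[symmetric])

lemma lampow_add:
  assumes "lam > 0" "a \<noteq> \<infinity>" "b \<noteq> \<infinity>"
  shows "lampow lam (a + b) = lampow lam a * lampow lam b"
  using assms by (cases a; cases b) (auto simp: lampow_def powr_add)

lemma sum_list_edge_pot_not_infty: "sum_list (map (\<lambda>(e, a). edge_pot M a (map x e)) G) \<noteq> \<infinity>"
proof (induction G)
  case (Cons p G)
  obtain e a where "p = (e, a)" by (cases p)
  moreover have "edge_pot M a (map x e) \<noteq> \<infinity>" by (cases M) auto
  ultimately show ?case using Cons by simp
qed simp

lemma lampow_hamiltonian:
  assumes "lam > 1"
  shows "lampow lam (hamiltonian M n G x) = gibbs_weight M lam n G x"
proof -
  have "lampow lam (ereal c + sum_list (map (\<lambda>(e, a). edge_pot M a (map x e)) G))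
       = lam powr c * prod_list (map (\<lambda>(e,a). edge_factor M lam a (map x e)) G)" for c
  proof (induction G)
    case Nil then show ?case by (simp add: lampow_def)
  next
    case (Cons p G)
    obtain e a where p: "p = (e, a)" by (cases p)
    let ?S = "sum_list (map (\<lambda>(e, a). edge_pot M a (map x e)) G)"
    have "ereal c + ?S \<noteq> \<infinity>" using sum_list_edge_pot_not_infty[of M x G] by simp
    moreover have "edge_pot M a (map x e) \<noteq> \<infinity>" by (cases M) auto
    ultimately show ?case
      using assms Cons
      by (simp add: p add.left_commute[of "ereal c"] lampow_add lampow_edge_pot)
  qed
  moreover have "node_pot M s = ereal (node_val M s)" for s by (cases M) auto
  ultimately show ?thesis unfolding hamiltonian_def gibbs_weight_def by simp
qed

lemma partition_fn_eq:
  "lam > 1 \<Longrightarrow> partition_fn M lam n G = (\<Sum>x\<in>configs M n. gibbs_weight M lam n G x)"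
  unfolding partition_fn_def configs_def by (simp add: lampow_hamiltonian)

lemma gibbs_weight_nonneg: "valid_model M \<Longrightarrow> lam > 1 \<Longrightarrow> gibbs_weight M lam n G x \<ge> 0"
  unfolding gibbs_weight_def using edge_factor_nonneg[of M lam]
  by (intro mult_nonneg_nonneg) (auto intro!: prod_list_nonneg)

text \<open>The all-zero configuration has positive weight: it violates no hard-core edge, and all
  other constraints are soft (\<open>d < 1\<close>).\<close>
lemma partition_fn_pos:
  assumes "valid_model M" "lam > 1" "\<And>e a. (e, a) \<in> set G \<Longrightarrow> set e \<subseteq> {0..<n}"
  shows "partition_fn M lam n G > 0"
proof -
  define x0 where "x0 = (\<lambda>i\<in>{0..<n}. 0::nat)"
  have "mq M \<ge> 1" using assms(1) by (cases M) auto
  then have x0: "x0 \<in> configs M n" unfolding x0_def configs_def by auto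
  have "edge_factor M lam a (map x0 e) > 0" if "(e, a) \<in> set G" for e a
  proof (rule edge_factor_pos[OF assms(1,2)])
    have "map x0 e = replicate (length e) 0"
      using assms(3)[OF that] unfolding x0_def by (auto intro!: nth_equalityI simp: subset_iff)
    then show "M \<noteq> IndSet \<or> violated M a (map x0 e) = 0" by (cases M) auto
  qed
  then have "prod_list (map (\<lambda>(e, a). edge_factor M lam a (map x0 e)) G) > 0"
    by (induction G) auto
  then have "gibbs_weight M lam n G x0 > 0"
    unfolding gibbs_weight_def using assms(2) by simp
  then show ?thesis
    unfolding partition_fn_eq[OF assms(2)]
    using x0 finite_configs gibbs_weight_nonneg[OF assms(1,2)] by (metis sum_pos2)
qed

lemma partition_fn_Cons:
  assumes "lam > 1"
  shows "partition_fn M lam n ((e,a)#G) = edge_scale M lam * (partition_fn M lam n G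
           - edge_damping M lam * (\<Sum>x\<in>configs M n. gibbs_weight M lam n G x * violated M a (map x e)))"
proof -
  have "gibbs_weight M lam n ((e,a)#G) x = edge_scale M lam * (gibbs_weight M lam n G x
          - edge_damping M lam * (gibbs_weight M lam n G x * violated M a (map x e)))" for x
    unfolding gibbs_weight_def edge_factor_def by (simp add: algebra_simps)
  then show ?thesis
    unfolding partition_fn_eq[OF assms] by (simp add: sum_distrib_left sum_subtractf right_diff_distrib)
qed

lemma partition_fn_rotate:
  "partition_fn M lam n (xs @ s # ys) = partition_fn M lam n (s # xs @ ys)"
  unfolding partition_fn_def hamiltonian_def by (simp add: add_ac)

section \<open>Edge sets and the split into two blocks\<close>

lemma finite_labels: "finite (labels M)"
proof -
  have "finite {a. length a = k \<and> set a \<subseteq> {0, 1::nat}}" for k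
    using finite_lists_length_eq[of "{0, 1::nat}" k] by (simp add: conj_commute)
  then show ?thesis by (cases M) auto
qed

lemma card_labels_pos: "card (labels M) > 0"
proof -
  have "labels M \<noteq> {}" by (cases M) (auto intro!: exI[of _ "replicate _ 0"])
  then show ?thesis using finite_labels by (simp add: card_gt_0_iff)
qed

lemma mK_pos: "valid_model M \<Longrightarrow> mK M \<ge> 1"
  by (cases M) auto

definition edge_set :: "model \<Rightarrow> nat set \<Rightarrow> (nat list \<times> nat list) set" where
  "edge_set M D = {e. set e \<subseteq> D \<and> length e = mK M} \<times> labels M"

lemma edges_eq_edge_set: "edges M n = edge_set M {0..<n}"
  unfolding edges_def edge_set_def by (auto simp: conj_commute)

lemma finite_edge_set: "finite D \<Longrightarrow> finite (edge_set M D)"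
  unfolding edge_set_def by (intro finite_cartesian_product finite_lists_length_eq finite_labels)

lemma card_edge_set: "finite D \<Longrightarrow> card (edge_set M D) = card D ^ mK M * card (labels M)"
  unfolding edge_set_def using finite_labels by (simp add: card_cartesian_product card_lists_length_eq)

lemma card_edge_set_pos: "finite D \<Longrightarrow> D \<noteq> {} \<Longrightarrow> card (edge_set M D) > 0"
  using card_labels_pos[of M] by (simp add: card_edge_set card_gt_0_iff)

lemma edge_set_mono: "D \<subseteq> D' \<Longrightarrow> edge_set M D \<subseteq> edge_set M D'"
  unfolding edge_set_def by auto

lemma edge_set_disjoint:
  assumes "valid_model M" "D \<inter> D' = {}"
  shows "edge_set M D \<inter> edge_set M D' = {}"
proof -
  have "e \<noteq> []" if "length e = mK M" for e :: "nat list" using that mK_pos[OF assms(1)] by auto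
  with assms(2) show ?thesis unfolding edge_set_def by (fastforce simp: neq_Nil_conv)
qed

definition shift_edge :: "nat \<Rightarrow> nat list \<times> nat list \<Rightarrow> nat list \<times> nat list" where
  "shift_edge k s = (map (\<lambda>i. i + k) (fst s), snd s)"

definition unshift_edge :: "nat \<Rightarrow> nat list \<times> nat list \<Rightarrow> nat list \<times> nat list" where
  "unshift_edge k s = (map (\<lambda>i. i - k) (fst s), snd s)"

lemma inj_shift_edge: "inj (shift_edge k)"
  unfolding inj_def shift_edge_def by (auto simp: prod_eq_iff inj_map_eq_map inj_def)

lemma unshift_shift_edge: "unshift_edge k (shift_edge k s) = s"
  by (simp add: unshift_edge_def shift_edge_def comp_def)

lemma edge_set_shift: "edge_set M {k..<k + n} = shift_edge k ` edge_set M {0..<n}"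
proof (intro equalityI subsetI)
  fix s assume "s \<in> edge_set M {k..<k + n}"
  then have "s = shift_edge k (unshift_edge k s)" "unshift_edge k s \<in> edge_set M {0..<n}"
    unfolding edge_set_def shift_edge_def unshift_edge_def
    by (auto simp: map_idI subset_iff)
  then show "s \<in> shift_edge k ` edge_set M {0..<n}" by blast
qed (fastforce simp: edge_set_def shift_edge_def)

lemma ElogZ_eq_seq_sum:
  assumes "valid_model M" "n \<ge> 1"
  shows "ElogZ M lam n m
    = seq_sum (edges M n) (\<lambda>_. 1 / real (card (edges M n))) m (\<lambda>G. ln (partition_fn M lam n G))"
proof -
  let ?E = "edges M n"
  let ?S = "{xs. set xs \<subseteq> ?E \<and> length xs = m}"
  have finE: "finite ?E" unfolding edges_eq_edge_set by (simp add: finite_edge_set)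
  have "?E \<noteq> {}" using card_edge_set_pos[of "{0..<n}" M] assms(2) unfolding edges_eq_edge_set by force
  then obtain e0 where "e0 \<in> ?E" by blast
  then have "replicate m e0 \<in> ?S" by auto
  then have "?S \<noteq> {}" by blast
  moreover have "{G. length G = m \<and> set G \<subseteq> ?E} = ?S" by auto
  ultimately have "ElogZ M lam n m = (\<Sum>G\<in>?S. ln (partition_fn M lam n G)) / real (card ?S)"
    unfolding ElogZ_def rand_graph_def using finite_lists_length_eq[OF finE]
    by (simp add: integral_pmf_of_set)
  then show ?thesis
    by (simp add: seq_sum_uniform card_lists_length_eq[OF finE])
qed

text \<open>Configurations on the disjoint union of the blocks \<open>{0..<N1}\<close> and \<open>{N1..<N1+N2}\<close> are
  pairs of configurations on the blocks; an edge inside one block only sees that block.\<close>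
lemma partition_fn_split:
  assumes lam: "lam > 1"
    and G: "set G \<subseteq> edge_set M {0..<N1} \<union> edge_set M {N1..<N1 + N2}"
  defines "G1 \<equiv> filter (\<lambda>s. s \<in> edge_set M {0..<N1}) G"
    and "G2 \<equiv> map (unshift_edge N1) (filter (\<lambda>s. s \<notin> edge_set M {0..<N1}) G)"
  shows "partition_fn M lam (N1 + N2) G = partition_fn M lam N1 G1 * partition_fn M lam N2 G2"
proof -
  let ?A = "edge_set M {0..<N1}" and ?N = "N1 + N2"
  define glue where "glue yz = (\<lambda>i. if i < N1 then fst yz i else if i < ?N then snd yz (i - N1) else undefined)"
    for yz :: "(nat \<Rightarrow> nat) \<times> (nat \<Rightarrow> nat)"
  define cut where "cut x = (restrict x {0..<N1}, \<lambda>i\<in>{0..<N2}. x (i + N1))" for x :: "nat \<Rightarrow> nat"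
  have bij: "bij_betw glue (configs M N1 \<times> configs M N2) (configs M ?N)"
    by (rule bij_betw_byWitness[where f' = cut])
      (auto simp: configs_def glue_def cut_def fun_eq_iff PiE_def extensional_def Pi_def)
  let ?F = "\<lambda>x. (\<lambda>(e, a). edge_factor M lam a (map x e))"
  have nodes: "(\<Sum>i<?N. node_val M (glue (y, z) i)) = (\<Sum>i<N1. node_val M (y i)) + (\<Sum>i<N2. node_val M (z i))"
    for y z
  proof -
    have "(\<Sum>i<N1 + n. f i) = (\<Sum>i<N1. f i) + (\<Sum>i<n. f (N1 + i))" for n and f :: "nat \<Rightarrow> real"
      by (induction n) (auto simp: add_ac)
    then show ?thesis by (simp add: glue_def)
  qed
  have edges1: "map (?F (glue (y, z))) (filter (\<lambda>s. s \<in> ?A) G) = map (?F y) G1" for y z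
    unfolding G1_def
    by (rule map_cong[OF refl])
      (auto simp: glue_def edge_set_def subset_iff intro!: arg_cong[where f="edge_factor M lam _"])
  have edges2: "map (?F (glue (y, z))) (filter (\<lambda>s. s \<notin> ?A) G) = map (?F z) G2" for y z
    unfolding G2_def map_map
  proof (rule map_cong[OF refl])
    fix s assume "s \<in> set (filter (\<lambda>s. s \<notin> ?A) G)"
    then obtain e a where "s = (e, a)" "set e \<subseteq> {N1..<?N}" using G unfolding edge_set_def by auto
    then show "?F (glue (y, z)) s = (?F z \<circ> unshift_edge N1) s"
      by (auto simp: glue_def unshift_edge_def subset_iff not_less[symmetric]
          intro!: arg_cong[where f="edge_factor M lam a"])
  qed
  have prod_list_filter: "prod_list (map f xs)
      = prod_list (map f (filter P xs)) * prod_list (map (f::_ \<Rightarrow> real) (filter (Not \<circ> P) xs))" for f xs P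
    by (induction xs) (auto simp: mult_ac)
  have "gibbs_weight M lam ?N G (glue (y, z)) = gibbs_weight M lam N1 G1 y * gibbs_weight M lam N2 G2 z" for y z
    unfolding gibbs_weight_def nodes
    using prod_list_filter[of "?F (glue (y, z))" G "\<lambda>s. s \<in> ?A"] edges1 edges2 lam
    by (simp add: powr_add comp_def mult_ac)
  then have "partition_fn M lam ?N G = (\<Sum>yz\<in>configs M N1 \<times> configs M N2.
      gibbs_weight M lam N1 G1 (fst yz) * gibbs_weight M lam N2 G2 (snd yz))"
    unfolding partition_fn_eq[OF lam] sum.reindex_bij_betw[OF bij, symmetric] by (metis prod.collapse)
  then show ?thesis
    unfolding partition_fn_eq[OF lam] by (simp add: sum_product sum.cartesian_product case_prod_unfold)
qed

text \<open>The law of one edge of the disjoint union of \<open>\<G>(N1, \<M>1)\<close> and (a shifted copy of)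
  \<open>\<G>(N2, \<M>2)\<close>: a uniform edge of a block, the block being chosen with probability proportional
  to its size.\<close>
definition split_edge_weight :: "model \<Rightarrow> nat \<Rightarrow> nat \<Rightarrow> nat list \<times> nat list \<Rightarrow> real" where
  "split_edge_weight M N1 N2 s =
     (if s \<in> edge_set M {0..<N1}
      then real N1 / real (N1 + N2) / real (card (edge_set M {0..<N1}))
      else real N2 / real (N1 + N2) / real (card (edge_set M {N1..<N1 + N2})))"

lemma sum_split_edge_weight:
  fixes N1 N2 :: nat and f :: "nat list \<times> nat list \<Rightarrow> real"
  assumes "valid_model M"
  defines "A \<equiv> edge_set M {0..<N1}" and "B \<equiv> edge_set M {N1..<N1 + N2}"
  shows "(\<Sum>s\<in>A \<union> B. split_edge_weight M N1 N2 s * f s)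
    = real N1 / real (N1 + N2) * ((\<Sum>s\<in>A. f s) / real (card A))
      + real N2 / real (N1 + N2) * ((\<Sum>s\<in>B. f s) / real (card B))"
proof -
  have disj: "A \<inter> B = {}" unfolding A_def B_def by (rule edge_set_disjoint[OF assms(1)]) auto
  then have "(\<Sum>s\<in>B. split_edge_weight M N1 N2 s * f s)
      = (\<Sum>s\<in>B. real N2 / real (N1 + N2) / real (card B) * f s)"
    unfolding split_edge_weight_def A_def B_def by (intro sum.cong) auto
  with disj show ?thesis
    unfolding A_def B_def
    by (simp add: sum.union_disjoint finite_edge_set split_edge_weight_def sum_distrib_left
        sum_divide_distrib)
qed

lemma ln_partition_fn_split:
  assumes "valid_model M" "lam > 1"
    and G: "set G \<subseteq> edge_set M {0..<N1} \<union> edge_set M {N1..<N1 + N2}"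
  shows "ln (partition_fn M lam (N1 + N2) G)
    = ln (partition_fn M lam N1 (filter (\<lambda>s. s \<in> edge_set M {0..<N1}) G))
      + ln (partition_fn M lam N2 (map (unshift_edge N1) (filter (\<lambda>s. s \<notin> edge_set M {0..<N1}) G)))"
proof -
  have "partition_fn M lam N1 (filter (\<lambda>s. s \<in> edge_set M {0..<N1}) G) > 0"
    by (rule partition_fn_pos[OF assms(1,2)]) (auto simp: edge_set_def)
  moreover have "partition_fn M lam N2 (map (unshift_edge N1) (filter (\<lambda>s. s \<notin> edge_set M {0..<N1}) G)) > 0"
    using G by (intro partition_fn_pos[OF assms(1,2)])
      (fastforce simp: edge_set_def unshift_edge_def subset_iff)
  ultimately show ?thesis
    using partition_fn_split[OF assms(2) G] by (simp add: ln_mult)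
qed

lemma seq_sum_split_edge_ln_partition_fn:
  assumes vm: "valid_model M" and lam: "lam > 1" and N: "N1 \<ge> 1" "N2 \<ge> 1"
  defines "A \<equiv> edge_set M {0..<N1}" and "B \<equiv> edge_set M {N1..<N1 + N2}"
    and "p \<equiv> real N1 / real (N1 + N2)" and "q \<equiv> real N2 / real (N1 + N2)"
  shows "seq_sum (A \<union> B) (split_edge_weight M N1 N2) m (\<lambda>G. ln (partition_fn M lam (N1 + N2) G))
    = (\<Sum>k\<le>m. real (m choose k) * (p^k * q^(m-k) * (ElogZ M lam N1 k + ElogZ M lam N2 (m-k))))"
proof -
  define wA where "wA = (\<lambda>_::nat list \<times> nat list. 1 / real (card A))"
  define wB where "wB = (\<lambda>_::nat list \<times> nat list. 1 / real (card B))"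
  define lnZ where "lnZ n G = ln (partition_fn M lam n G)" for n G
  have fin: "finite A" "finite B" unfolding A_def B_def by (simp_all add: finite_edge_set)
  have card: "card A > 0" "card B > 0" unfolding A_def B_def using N by (simp_all add: card_edge_set_pos)
  have disj: "A \<inter> B = {}" unfolding A_def B_def by (rule edge_set_disjoint[OF vm]) auto
  have weight: "split_edge_weight M N1 N2 = (\<lambda>s. if s \<in> A then p * wA s else q * wB s)"
    unfolding split_edge_weight_def A_def B_def p_def q_def wA_def wB_def by auto
  have sums: "sum wA A = 1" "sum wB B = 1" unfolding wA_def wB_def using card by auto
  have EA: "seq_sum A wA k (lnZ N1) = ElogZ M lam N1 k" for k
    unfolding ElogZ_eq_seq_sum[OF vm N(1)] by (simp add: A_def wA_def edges_eq_edge_set lnZ_def[abs_def])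
  have B: "B = shift_edge N1 ` edges M N2" unfolding B_def edges_eq_edge_set by (rule edge_set_shift)
  have inj: "inj_on (shift_edge N1) (edges M N2)" using inj_shift_edge by (rule inj_on_subset) simp
  have EB: "seq_sum B wB j (\<lambda>G2. lnZ N2 (map (unshift_edge N1) G2)) = ElogZ M lam N2 j" for j
    unfolding ElogZ_eq_seq_sum[OF vm N(2)] B seq_sum_reindex[OF inj]
    using card_image[OF inj] by (simp add: wB_def comp_def unshift_shift_edge lnZ_def B)
  have "seq_sum (A \<union> B) (split_edge_weight M N1 N2) m (lnZ (N1 + N2))
      = seq_sum (A \<union> B) (split_edge_weight M N1 N2) m (\<lambda>G. lnZ N1 (filter (\<lambda>s. s \<in> A) G)
          + lnZ N2 (map (unshift_edge N1) (filter (\<lambda>s. s \<notin> A) G)))"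
    unfolding lnZ_def A_def B_def by (intro seq_sum_cong ln_partition_fn_split vm lam)
  also have "\<dots> = (\<Sum>k\<le>m. real (m choose k) * (p^k * q^(m-k) * seq_sum A wA k (\<lambda>G1.
      seq_sum B wB (m-k) (\<lambda>G2. lnZ N1 G1 + lnZ N2 (map (unshift_edge N1) G2)))))"
    unfolding weight by (rule seq_sum_split_binomial[OF disj fin])
  also have "\<dots> = (\<Sum>k\<le>m. real (m choose k) * (p^k * q^(m-k) * (ElogZ M lam N1 k + ElogZ M lam N2 (m-k))))"
    by (simp add: seq_sum_add seq_sum_const sums EA EB)
  finally show ?thesis unfolding lnZ_def .
qed

section \<open>Replica decompositions\<close>

lemma sum_lists_prod_list:
  "(\<Sum>e\<in>{xs. set xs \<subseteq> D \<and> length xs = K}. prod_list (map (f :: 'a \<Rightarrow> real) e)) = sum f D ^ K"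
proof (induction K)
  case 0
  have "{xs. set xs \<subseteq> D \<and> length xs = 0} = {[]}" by auto
  then show ?case by simp
next
  case (Suc K)
  have "(\<Sum>e\<in>{xs. set xs \<subseteq> D \<and> length xs = Suc K}. prod_list (map f e))
      = (\<Sum>i\<in>D. f i * (\<Sum>e\<in>{xs. set xs \<subseteq> D \<and> length xs = K}. prod_list (map f e)))"
    by (simp add: sum_lists_length_Suc sum_distrib_left)
  then show ?case by (simp add: Suc sum_distrib_right)
qed

lemma sum_lists_prod_list_zip:
  "(\<Sum>a\<in>{xs. set xs \<subseteq> B \<and> length xs = length e}. prod_list (map2 (g :: 'a \<Rightarrow> 'b \<Rightarrow> real) e a))
     = prod_list (map (\<lambda>i. \<Sum>b\<in>B. g i b) e)"
proof (induction e)
  case Nil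
  have "{xs. set xs \<subseteq> B \<and> length xs = 0} = {[]}" by auto
  then show ?case by simp
next
  case (Cons i e)
  then show ?case
    by (simp add: sum_lists_length_Suc sum_distrib_left[symmetric] sum_distrib_right[symmetric])
qed

lemma prod_of_bool_lessThan: "(\<Prod>l<(r::nat). (of_bool (Q l)::real)) = of_bool (\<forall>l<r. Q l)"
  by (induction r) (auto simp: less_Suc_eq)

lemma prod_list_of_bool_zip:
  "length a = length e \<Longrightarrow>
     prod_list (map2 (\<lambda>i b. (of_bool (Q i b)::real)) e a) = of_bool (\<forall>j<length e. Q (e!j) (a!j))"
proof (induction e arbitrary: a)
  case (Cons i e)
  then obtain b a' where "a = b # a'" "length a' = length e" by (cases a) auto
  with Cons.IH show ?case by (auto simp: less_Suc_eq_0_disj)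
qed simp

lemma prod_list_map_cmult: "prod_list (map (\<lambda>i. c * f i) e) = (c::real) ^ length e * prod_list (map f e)"
  by (induction e) auto

definition flip_bit :: "nat \<Rightarrow> nat \<Rightarrow> nat" where
  "flip_bit s b = (if s = 0 then b else 1 - b)"

lemma map_flip_bit_0: "map (flip_bit 0) a = a"
  by (simp add: flip_bit_def map_idI)

lemma prod_of_bool_map_eq_flip:
  fixes r :: nat
  assumes "length a = length e"
  shows "(\<Prod>l<r. (of_bool (map (X l) e = map (flip_bit (\<sigma> l)) a)::real))
       = prod_list (map2 (\<lambda>i b. of_bool (\<forall>l<r. X l i = flip_bit (\<sigma> l) b)) e a)"
proof -
  have "(\<forall>l<r. map (X l) e = map (flip_bit (\<sigma> l)) a)
      \<longleftrightarrow> (\<forall>j<length e. \<forall>l<r. X l (e!j) = flip_bit (\<sigma> l) (a!j))"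
    using assms by (auto simp: list_eq_iff_nth_eq)
  then show ?thesis using prod_list_of_bool_zip[OF assms] by (simp add: prod_of_bool_lessThan)
qed

lemma labels_SAT: "M = KSAT k \<or> M = NAESAT k \<Longrightarrow> labels M = {xs. set xs \<subseteq> {0,1} \<and> length xs = k}"
  by auto

lemma card_labels_SAT: "M = KSAT k \<or> M = NAESAT k \<Longrightarrow> card (labels M) = 2 ^ k"
  by (simp add: labels_SAT card_lists_length_eq numeral_2_eq_2)

text \<open>The label average of the probability that \<open>r\<close> replicas \<open>X 0, \<dots>, X (r - 1)\<close> all violate
  an edge is a nonnegative mixture, indexed by \<open>T\<close>, of products over the vertices of the
  edge. This is the only place where the particular models matter.\<close>
definition replica_decomposition ::
    "model \<Rightarrow> nat set \<Rightarrow> nat \<Rightarrow> (nat \<Rightarrow> nat \<Rightarrow> nat) \<Rightarrow> (nat \<Rightarrow> nat) set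
      \<Rightarrow> ((nat \<Rightarrow> nat) \<Rightarrow> nat \<Rightarrow> real) \<Rightarrow> bool" where
  "replica_decomposition M D r X T \<phi> \<longleftrightarrow> finite T \<and> (\<forall>t\<in>T. \<forall>i. \<phi> t i \<ge> 0) \<and>
     (\<forall>e. length e = mK M \<and> set e \<subseteq> D \<longrightarrow>
        (\<Sum>a\<in>labels M. \<Prod>l<r. violated M a (map (X l) e))
          = real (card (labels M)) * (\<Sum>t\<in>T. prod_list (map (\<phi> t) e)))"

lemma replica_decomposition_IndSet: "\<exists>T \<phi>. replica_decomposition IndSet D r X T \<phi>"
proof -
  define \<phi> where "\<phi> t i = (\<Prod>l<r. (of_bool (X l i = 1)::real))" for t :: "nat \<Rightarrow> nat" and i
  have "replica_decomposition IndSet D r X {\<lambda>_. 0} \<phi>"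
    unfolding replica_decomposition_def
  proof (intro conjI allI impI ballI)
    fix e :: "nat list" assume "length e = mK IndSet \<and> set e \<subseteq> D"
    then obtain u v where e: "e = [u, v]" by (auto simp: numeral_2_eq_2 length_Suc_conv)
    have "(\<Prod>l<r. (of_bool ([X l u, X l v] = [1, 1])::real))
        = (\<Prod>l<r. of_bool (X l u = 1) * of_bool (X l v = 1))"
      by (rule prod.cong) auto
    then show "(\<Sum>a\<in>labels IndSet. \<Prod>l<r. violated IndSet a (map (X l) e))
        = real (card (labels IndSet)) * (\<Sum>t\<in>{\<lambda>_. 0}. prod_list (map (\<phi> t) e))"
      by (simp add: e \<phi>_def prod.distrib)
  qed (auto simp: \<phi>_def intro!: prod_nonneg)
  then show ?thesis by blast
qed

text \<open>In MaxCut, Ising and Coloring an edge is violated iff its endpoints agree, so all replicas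
  violate it iff the vectors of replica values at the two endpoints coincide; sum over the
  possible vectors.\<close>
lemma replica_decomposition_pair:
  assumes "M = MaxCut \<or> M = Ising \<beta> B \<or> M = Coloring q" and fin: "finite D"
  shows "\<exists>T \<phi>. replica_decomposition M D r X T \<phi>"
proof -
  define P where "P i = (\<lambda>l. if l < r then X l i else 0)" for i
  define \<phi> where "\<phi> s i = (of_bool (P i = s)::real)" for s :: "nat \<Rightarrow> nat" and i
  have M: "violated M a xs = of_bool (xs ! 0 = xs ! 1)" "labels M = {[]}" "mK M = 2" for a xs
    using assms(1) by auto
  have "replica_decomposition M D r X (P ` D) \<phi>"
    unfolding replica_decomposition_def
  proof (intro conjI allI impI ballI)
    fix e :: "nat list" assume "length e = mK M \<and> set e \<subseteq> D"
    then obtain u v where e: "e = [u, v]" and uv: "u \<in> D" "v \<in> D"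
      unfolding M by (auto simp: numeral_2_eq_2 length_Suc_conv)
    have "(\<Prod>l<r. (of_bool (X l u = X l v)::real)) = of_bool (P u = P v)"
      by (simp add: prod_of_bool_lessThan P_def fun_eq_iff)
    also have "\<dots> = (\<Sum>s\<in>P ` D. if s = P u then of_bool (P v = s) else 0)"
      using uv fin by (simp add: sum.delta')
    also have "\<dots> = (\<Sum>s\<in>P ` D. of_bool (P u = s) * of_bool (P v = s))"
      by (intro sum.cong) auto
    finally show "(\<Sum>a\<in>labels M. \<Prod>l<r. violated M a (map (X l) e))
        = real (card (labels M)) * (\<Sum>t\<in>P ` D. prod_list (map (\<phi> t) e))"
      by (simp add: e \<phi>_def M)
  qed (auto simp: \<phi>_def fin)
  then show ?thesis by blast
qed

lemma replica_decomposition_KSAT: "\<exists>T \<phi>. replica_decomposition (KSAT k) D r X T \<phi>"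
proof -
  define \<phi> where "\<phi> t i = (1/2) * (\<Sum>b\<in>{0,1}. (of_bool (\<forall>l<r. X l i = b)::real))"
    for t :: "nat \<Rightarrow> nat" and i
  have "replica_decomposition (KSAT k) D r X {\<lambda>_. 0} \<phi>"
    unfolding replica_decomposition_def
  proof (intro conjI allI impI ballI)
    fix e :: "nat list" assume e: "length e = mK (KSAT k) \<and> set e \<subseteq> D"
    have "(\<Sum>a\<in>labels (KSAT k). \<Prod>l<r. violated (KSAT k) a (map (X l) e))
        = (\<Sum>a\<in>{xs. set xs \<subseteq> {0,1} \<and> length xs = length e}.
            prod_list (map2 (\<lambda>i b. of_bool (\<forall>l<r. X l i = flip_bit 0 b)) e a))"
      using e prod_of_bool_map_eq_flip[where e=e and r=r and X=X and \<sigma>="\<lambda>_. 0"]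
      by (intro sum.cong) (auto simp: map_flip_bit_0)
    also have "\<dots> = 2 ^ k * prod_list (map (\<phi> (\<lambda>_. 0)) e)"
      using e unfolding sum_lists_prod_list_zip \<phi>_def prod_list_map_cmult
      by (simp add: power_one_over flip_bit_def)
    finally show "(\<Sum>a\<in>labels (KSAT k). \<Prod>l<r. violated (KSAT k) a (map (X l) e))
        = real (card (labels (KSAT k))) * (\<Sum>t\<in>{\<lambda>_. 0}. prod_list (map (\<phi> t) e))"
      using card_labels_SAT[of "KSAT k" k] by simp
  qed (auto simp: \<phi>_def)
  then show ?thesis by blast
qed

text \<open>An NAE clause is violated iff the assignment equals the sign vector or its complement;
  expanding the product over replicas chooses one of the two for each replica.\<close>
lemma replica_decomposition_NAESAT:
  assumes "k \<ge> 2"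
  shows "\<exists>T \<phi>. replica_decomposition (NAESAT k) D r X T \<phi>"
proof -
  define S where "S = PiE {..<r} (\<lambda>_. {0,1::nat})"
  define \<phi> where "\<phi> \<sigma> i = (1/2) * (\<Sum>b\<in>{0,1}. (of_bool (\<forall>l<r. X l i = flip_bit (\<sigma> l) b)::real))"
    for \<sigma> :: "nat \<Rightarrow> nat" and i
  have "replica_decomposition (NAESAT k) D r X S \<phi>"
    unfolding replica_decomposition_def
  proof (intro conjI allI impI ballI)
    fix e :: "nat list" assume e: "length e = mK (NAESAT k) \<and> set e \<subseteq> D"
    let ?L = "{xs. set xs \<subseteq> {0,1::nat} \<and> length xs = length e}"
    have violated_eq: "violated (NAESAT k) a xs = (\<Sum>s\<in>{0,1::nat}. of_bool (xs = map (flip_bit s) a))"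
      if a: "a \<in> ?L" for a xs
    proof -
      obtain b a' where "a = b # a'" "b \<in> {0, 1}" using a e assms by (cases a) auto
      then have "a \<noteq> map (\<lambda>b. 1 - b) a" by auto
      have flip_1: "map (flip_bit 1) a = map (\<lambda>b. 1 - b) a" by (simp add: flip_bit_def)
      have "(\<Sum>s\<in>{0,1::nat}. (of_bool (xs = map (flip_bit s) a) :: real))
          = of_bool (xs = map (flip_bit 0) a) + of_bool (xs = map (flip_bit 1) a)"
        by simp
      also have "\<dots> = of_bool (xs = a) + of_bool (xs = map (\<lambda>b. 1 - b) a)"
        unfolding map_flip_bit_0 flip_1 ..
      finally show ?thesis using \<open>a \<noteq> map (\<lambda>b. 1 - b) a\<close> by auto
    qed
    have "(\<Sum>a\<in>labels (NAESAT k). \<Prod>l<r. violated (NAESAT k) a (map (X l) e))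
        = (\<Sum>a\<in>?L. \<Prod>l<r. \<Sum>s\<in>{0,1::nat}. of_bool (map (X l) e = map (flip_bit s) a))"
      using e by (intro sum.cong prod.cong refl violated_eq) auto
    also have "\<dots> = (\<Sum>a\<in>?L. \<Sum>\<sigma>\<in>S. \<Prod>l<r. of_bool (map (X l) e = map (flip_bit (\<sigma> l)) a))"
      unfolding S_def by (intro sum.cong refl prod_sum_PiE) auto
    also have "\<dots> = (\<Sum>\<sigma>\<in>S. \<Sum>a\<in>?L. prod_list (map2 (\<lambda>i b. of_bool (\<forall>l<r. X l i = flip_bit (\<sigma> l) b)) e a))"
      by (subst sum.swap) (intro sum.cong refl prod_of_bool_map_eq_flip, auto)
    also have "\<dots> = (\<Sum>\<sigma>\<in>S. 2 ^ k * prod_list (map (\<phi> \<sigma>) e))"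
      using e unfolding sum_lists_prod_list_zip \<phi>_def prod_list_map_cmult
      by (intro sum.cong refl) (simp add: power_one_over)
    finally show "(\<Sum>a\<in>labels (NAESAT k). \<Prod>l<r. violated (NAESAT k) a (map (X l) e))
        = real (card (labels (NAESAT k))) * (\<Sum>t\<in>S. prod_list (map (\<phi> t) e))"
      using card_labels_SAT[of "NAESAT k" k] by (simp add: sum_distrib_left)
  qed (auto simp: \<phi>_def S_def finite_PiE)
  then show ?thesis by blast
qed

lemma replica_decomposition_exists:
  assumes "valid_model M" "finite D"
  shows "\<exists>T \<phi>. replica_decomposition M D r X T \<phi>"
  using assms replica_decomposition_IndSet replica_decomposition_pair
    replica_decomposition_KSAT replica_decomposition_NAESAT
  by (cases M) auto

section \<open>Comparison of moments\<close>

lemma power_convex_comb_le: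
  fixes u v a :: real
  assumes "0 \<le> a" "a \<le> 1" "0 \<le> u" "0 \<le> v"
  shows "(a * u + (1 - a) * v) ^ K \<le> a * u ^ K + (1 - a) * v ^ K"
proof -
  have "convex_on {0::real..} (\<lambda>x. x ^ K)"
    by (cases "even K")
      (auto intro: convex_on_subset[OF convex_power_even] simp: convex_power_odd)
  from convex_onD[OF this, of "1 - a" u v] assms show ?thesis by (simp add: algebra_simps)
qed

definition replica_violation :: "model \<Rightarrow> nat \<Rightarrow> (nat \<Rightarrow> nat \<Rightarrow> nat) \<Rightarrow> nat list \<times> nat list \<Rightarrow> real" where
  "replica_violation M r X s = (\<Prod>l<r. violated M (snd s) (map (X l) (fst s)))"

lemma average_replica_violation:
  assumes dec: "replica_decomposition M D' r X T \<phi>" and D: "D \<subseteq> D'" "finite D"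
  shows "(\<Sum>s\<in>edge_set M D. replica_violation M r X s) / real (card (edge_set M D))
     = (\<Sum>t\<in>T. ((\<Sum>i\<in>D. \<phi> t i) / real (card D)) ^ mK M)"
proof -
  let ?L = "{e. set e \<subseteq> D \<and> length e = mK M}" and ?c = "real (card (labels M))"
  have "(\<Sum>s\<in>edge_set M D. replica_violation M r X s)
      = (\<Sum>e\<in>?L. \<Sum>a\<in>labels M. \<Prod>l<r. violated M a (map (X l) e))"
    unfolding edge_set_def replica_violation_def by (simp add: sum.cartesian_product case_prod_unfold)
  also have "\<dots> = (\<Sum>e\<in>?L. ?c * (\<Sum>t\<in>T. prod_list (map (\<phi> t) e)))"
    using dec D unfolding replica_decomposition_def by (intro sum.cong refl) auto
  also have "\<dots> = ?c * (\<Sum>t\<in>T. \<Sum>e\<in>?L. prod_list (map (\<phi> t) e))"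
    unfolding sum_distrib_left[symmetric] by (rule arg_cong[where f="(*) ?c"], rule sum.swap)
  also have "\<dots> = ?c * (\<Sum>t\<in>T. (\<Sum>i\<in>D. \<phi> t i) ^ mK M)"
    using sum_lists_prod_list[where D=D and K="mK M"] by (simp add: conj_commute)
  finally show ?thesis
    using card_labels_pos[of M] D
    by (simp add: card_edge_set power_divide sum_divide_distrib[symmetric])
qed

text \<open>The average over all edges is a convex combination of the averages inside the two blocks,
  applied to the convex function \<open>x \<mapsto> x ^ K\<close> of the node averages of \<open>\<phi>\<close>.\<close>
lemma average_replica_violation_split_le:
  assumes vm: "valid_model M" and N: "N1 \<ge> 1" "N2 \<ge> 1"
  defines "E \<equiv> edge_set M {0..<N1 + N2}" and "A \<equiv> edge_set M {0..<N1}"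
    and "B \<equiv> edge_set M {N1..<N1 + N2}"
  shows "(\<Sum>s\<in>E. replica_violation M r X s) / real (card E)
    \<le> real N1 / real (N1 + N2) * ((\<Sum>s\<in>A. replica_violation M r X s) / real (card A))
     + real N2 / real (N1 + N2) * ((\<Sum>s\<in>B. replica_violation M r X s) / real (card B))"
proof -
  obtain T \<phi> where dec: "replica_decomposition M {0..<N1 + N2} r X T \<phi>"
    using replica_decomposition_exists[OF vm] by blast
  then have \<phi>: "\<phi> t i \<ge> 0" if "t \<in> T" for t i using that unfolding replica_decomposition_def by blast
  let ?a = "real N1 / real (N1 + N2)" and ?K = "mK M"
  define u where "u t = (\<Sum>i\<in>{0..<N1}. \<phi> t i) / real N1" for t
  define v where "v t = (\<Sum>i\<in>{N1..<N1 + N2}. \<phi> t i) / real N2" for t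
  have a: "0 \<le> ?a" "?a \<le> 1" "1 - ?a = real N2 / real (N1 + N2)" using N by (auto simp: field_simps)
  have mean: "(\<Sum>i\<in>{0..<N1 + N2}. \<phi> t i) / real (N1 + N2) = ?a * u t + (1 - ?a) * v t" for t
  proof -
    have "(\<Sum>i\<in>{0..<N1 + N2}. \<phi> t i) = (\<Sum>i\<in>{0..<N1}. \<phi> t i) + (\<Sum>i\<in>{N1..<N1 + N2}. \<phi> t i)"
      by (rule sum.atLeastLessThan_concat[symmetric]) simp_all
    then show ?thesis unfolding a(3) u_def v_def using N by (simp add: add_divide_distrib)
  qed
  have "(\<Sum>t\<in>T. ((\<Sum>i\<in>{0..<N1 + N2}. \<phi> t i) / real (N1 + N2)) ^ ?K)
      \<le> (\<Sum>t\<in>T. ?a * u t ^ ?K + (1 - ?a) * v t ^ ?K)"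
  proof (rule sum_mono)
    fix t assume "t \<in> T"
    then have uv: "u t \<ge> 0" "v t \<ge> 0" unfolding u_def v_def using \<phi> by (auto intro!: divide_nonneg_nonneg sum_nonneg)
    show "((\<Sum>i\<in>{0..<N1 + N2}. \<phi> t i) / real (N1 + N2)) ^ ?K \<le> ?a * u t ^ ?K + (1 - ?a) * v t ^ ?K"
      unfolding mean by (intro power_convex_comb_le a(1,2) uv)
  qed
  also have "\<dots> = ?a * (\<Sum>t\<in>T. u t ^ ?K) + (1 - ?a) * (\<Sum>t\<in>T. v t ^ ?K)"
    by (simp only: sum.distrib sum_distrib_left)
  finally show ?thesis
    using average_replica_violation[OF dec, of "{0..<N1 + N2}"]
      average_replica_violation[OF dec, of "{0..<N1}"] average_replica_violation[OF dec, of "{N1..<N1 + N2}"]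
    unfolding E_def A_def B_def a(3) u_def v_def by simp
qed

text \<open>Expanding \<open>y s ^ r\<close> over \<open>r\<close> independent replicas drawn from \<open>\<mu>\<close> reduces the moment
  comparison to the one for fixed replicas.\<close>
lemma moment_split_le:
  assumes vm: "valid_model M" and N: "N1 \<ge> 1" "N2 \<ge> 1"
    and C: "finite C" and \<mu>: "\<And>x. x \<in> C \<Longrightarrow> \<mu> x \<ge> 0"
  defines "y s \<equiv> \<Sum>x\<in>C. \<mu> x * violated M (snd s) (map x (fst s))"
    and "E \<equiv> edge_set M {0..<N1 + N2}" and "A \<equiv> edge_set M {0..<N1}"
    and "B \<equiv> edge_set M {N1..<N1 + N2}"
  shows "(\<Sum>s\<in>E. y s ^ r) / real (card E) \<le> (\<Sum>s\<in>A \<union> B. split_edge_weight M N1 N2 s * y s ^ r)"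
proof -
  let ?P = "PiE {..<r} (\<lambda>_. C)"
  have expand: "y s ^ r = (\<Sum>X\<in>?P. (\<Prod>l<r. \<mu> (X l)) * replica_violation M r X s)" for s
  proof -
    have "y s ^ r = (\<Prod>l<r. \<Sum>x\<in>C. \<mu> x * violated M (snd s) (map x (fst s)))"
      unfolding y_def by simp
    also have "\<dots> = (\<Sum>X\<in>?P. \<Prod>l<r. \<mu> (X l) * violated M (snd s) (map (X l) (fst s)))"
      using prod_sum_PiE[of "{..<r}" "\<lambda>_. C" "\<lambda>_ x. \<mu> x * violated M (snd s) (map x (fst s))"] C
      by simp
    finally show ?thesis unfolding replica_violation_def by (simp add: prod.distrib)
  qed
  have avg: "(\<Sum>s\<in>S. y s ^ r) / real (card S)
     = (\<Sum>X\<in>?P. (\<Prod>l<r. \<mu> (X l)) * ((\<Sum>s\<in>S. replica_violation M r X s) / real (card S)))" for S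
    unfolding expand by (subst sum.swap) (simp add: sum_divide_distrib sum_distrib_left)
  have "(\<Prod>l<r. \<mu> (X l)) \<ge> 0" if "X \<in> ?P" for X using that \<mu> by (auto intro!: prod_nonneg)
  then have "(\<Sum>s\<in>E. y s ^ r) / real (card E)
    \<le> (\<Sum>X\<in>?P. (\<Prod>l<r. \<mu> (X l)) * (real N1 / real (N1 + N2) * ((\<Sum>s\<in>A. replica_violation M r X s) / real (card A))
     + real N2 / real (N1 + N2) * ((\<Sum>s\<in>B. replica_violation M r X s) / real (card B))))"
    unfolding avg E_def A_def B_def
    by (intro sum_mono mult_left_mono average_replica_violation_split_le[OF vm N])
  also have "\<dots> = (\<Sum>s\<in>A \<union> B. split_edge_weight M N1 N2 s * y s ^ r)"
    unfolding A_def B_def sum_split_edge_weight[OF vm] avg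
    by (simp add: distrib_left sum.distrib sum_distrib_left mult_ac)
  finally show ?thesis .
qed

section \<open>Exchanging one edge\<close>

text \<open>Termwise comparison of the series \<open>ln (1 - z) = - (\<Sum>n. z ^ n / n)\<close>.\<close>
lemma sum_ln_one_minus_le:
  fixes z :: "'a \<Rightarrow> real"
  assumes "finite S" "finite T" and z: "\<And>s. s \<in> S \<union> T \<Longrightarrow> 0 \<le> z s \<and> z s < 1"
    and moments: "\<And>n. (\<Sum>s\<in>S. p s * z s ^ n) \<le> (\<Sum>t\<in>T. q t * z t ^ n)"
  shows "(\<Sum>t\<in>T. q t * ln (1 - z t)) \<le> (\<Sum>s\<in>S. p s * ln (1 - z s))"
proof -
  have series: "(\<lambda>n. - (z s ^ n) / real n) sums ln (1 - z s)" if "s \<in> S \<union> T" for s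
    using ln_series'[of "- z s"] z[OF that] by simp
  have "(\<lambda>n. \<Sum>t\<in>T. q t * (- (z t ^ n) / real n)) sums (\<Sum>t\<in>T. q t * ln (1 - z t))"
    using series by (intro sums_sum sums_mult) auto
  moreover have "(\<lambda>n. \<Sum>s\<in>S. p s * (- (z s ^ n) / real n)) sums (\<Sum>s\<in>S. p s * ln (1 - z s))"
    using series by (intro sums_sum sums_mult) auto
  moreover have "(\<Sum>t\<in>T. q t * (- (z t ^ n) / real n)) \<le> (\<Sum>s\<in>S. p s * (- (z s ^ n) / real n))" for n
    using mult_left_mono[OF moments[of n], of "1 / real n"]
    by (simp add: sum_distrib_left sum_divide_distrib sum_negf mult_ac)
  ultimately show ?thesis by (rule sums_le[rotated])
qed

definition violation_prob ::
    "model \<Rightarrow> real \<Rightarrow> nat \<Rightarrow> (nat list \<times> nat list) list \<Rightarrow> nat list \<times> nat list \<Rightarrow> real" where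
  "violation_prob M lam n G s = (\<Sum>x\<in>configs M n.
     gibbs_weight M lam n G x / partition_fn M lam n G * violated M (snd s) (map x (fst s)))"

lemma partition_fn_Cons_violation_prob:
  assumes "lam > 1" "partition_fn M lam n G \<noteq> 0"
  shows "partition_fn M lam n (s # G)
    = edge_scale M lam * partition_fn M lam n G * (1 - edge_damping M lam * violation_prob M lam n G s)"
proof -
  obtain e a where s: "s = (e, a)" by (cases s)
  have "(\<Sum>x\<in>configs M n. gibbs_weight M lam n G x * violated M a (map x e))
      = partition_fn M lam n G * violation_prob M lam n G s"
    unfolding violation_prob_def s using assms(2) by (simp add: sum_distrib_left)
  then show ?thesis unfolding s partition_fn_Cons[OF assms(1)] by (simp add: algebra_simps)
qed

lemma violation_prob_bounds:
  assumes vm: "valid_model M" and lam: "lam > 1"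
    and s: "set (fst s) \<subseteq> {0..<n}" and G: "\<And>e a. (e, a) \<in> set G \<Longrightarrow> set e \<subseteq> {0..<n}"
  shows "0 \<le> edge_damping M lam * violation_prob M lam n G s"
    and "edge_damping M lam * violation_prob M lam n G s < 1"
proof -
  have Z: "partition_fn M lam n G > 0" using partition_fn_pos[OF vm lam G] .
  show "0 \<le> edge_damping M lam * violation_prob M lam n G s"
    unfolding violation_prob_def using less_imp_le[OF Z] edge_damping_nonneg[OF vm lam]
    by (auto intro!: mult_nonneg_nonneg divide_nonneg_nonneg sum_nonneg
        gibbs_weight_nonneg[OF vm lam] violated_nonneg)
  have "partition_fn M lam n (s # G) > 0"
    using G s by (intro partition_fn_pos[OF vm lam]) force
  then show "edge_damping M lam * violation_prob M lam n G s < 1"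
    using Z edge_scale_pos[OF lam, of M]
    by (simp add: partition_fn_Cons_violation_prob[OF lam] zero_less_mult_iff mult_less_0_iff)
qed

lemma split_edge_exchange_le:
  assumes vm: "valid_model M" and lam: "lam > 1" and N: "N1 \<ge> 1" "N2 \<ge> 1"
    and G: "set G \<subseteq> edge_set M {0..<N1 + N2}"
  defines "E \<equiv> edge_set M {0..<N1 + N2}" and "A \<equiv> edge_set M {0..<N1}"
    and "B \<equiv> edge_set M {N1..<N1 + N2}"
  shows "(\<Sum>s\<in>A \<union> B. split_edge_weight M N1 N2 s * ln (partition_fn M lam (N1 + N2) (s # G)))
       \<le> (\<Sum>s\<in>E. 1 / real (card E) * ln (partition_fn M lam (N1 + N2) (s # G)))"
proof -
  let ?n = "N1 + N2" and ?sw = "split_edge_weight M N1 N2"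
  let ?Z = "partition_fn M lam ?n G" and ?d = "edge_damping M lam"
  define z where "z s = ?d * violation_prob M lam ?n G s" for s
  have G': "\<And>e a. (e, a) \<in> set G \<Longrightarrow> set e \<subseteq> {0..<?n}" using G by (auto simp: edge_set_def)
  have Z: "?Z > 0" using partition_fn_pos[OF vm lam G'] .
  have AB: "A \<union> B \<subseteq> E" unfolding A_def B_def E_def by (intro Un_least edge_set_mono) auto
  have fin: "finite E" "finite (A \<union> B)" unfolding A_def B_def E_def by (simp_all add: finite_edge_set)
  have cardE: "card E > 0" unfolding E_def using N by (simp add: card_edge_set_pos)
  have in_E: "set (fst s) \<subseteq> {0..<?n}" if "s \<in> E" for s using that unfolding E_def edge_set_def by auto
  have z: "0 \<le> z s \<and> z s < 1" if "s \<in> E" for s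
    unfolding z_def using violation_prob_bounds[OF vm lam in_E[OF that] G'] by simp
  define c where "c = ln (edge_scale M lam) + ln ?Z"
  have lnZ: "ln (partition_fn M lam ?n (s # G)) = c + ln (1 - z s)" if "s \<in> E" for s
    using z[OF that] Z edge_scale_pos[OF lam, of M]
    by (simp add: partition_fn_Cons_violation_prob[OF lam] z_def c_def ln_mult)
  have average: "(\<Sum>s\<in>S. w s * ln (partition_fn M lam ?n (s # G))) = c + (\<Sum>s\<in>S. w s * ln (1 - z s))"
    if "S \<subseteq> E" "sum w S = 1" for S w
  proof -
    have "(\<Sum>s\<in>S. w s * ln (partition_fn M lam ?n (s # G))) = (\<Sum>s\<in>S. w s * c + w s * ln (1 - z s))"
      using that(1) by (intro sum.cong) (auto simp: lnZ distrib_left)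
    then show ?thesis by (simp add: sum.distrib sum_distrib_right[symmetric] that(2))
  qed
  have weights: "(\<Sum>s\<in>A \<union> B. ?sw s) = 1" "(\<Sum>s\<in>E. 1 / real (card E)) = 1"
    using sum_split_edge_weight[OF vm, of N1 N2 "\<lambda>_. 1"] N cardE
    unfolding A_def B_def by (simp_all add: card_edge_set_pos add_divide_distrib[symmetric])
  have "(\<Sum>s\<in>E. 1 / real (card E) * z s ^ k) \<le> (\<Sum>s\<in>A \<union> B. ?sw s * z s ^ k)" for k
  proof -
    have "(\<Sum>s\<in>E. violation_prob M lam ?n G s ^ k) / real (card E)
        \<le> (\<Sum>s\<in>A \<union> B. ?sw s * violation_prob M lam ?n G s ^ k)"
      unfolding violation_prob_def E_def A_def B_def
      using Z by (intro moment_split_le[OF vm N finite_configs]) (simp add: gibbs_weight_nonneg[OF vm lam])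
    from mult_left_mono[OF this, of "?d ^ k"] show ?thesis
      using edge_damping_nonneg[OF vm lam]
      by (simp add: z_def power_mult_distrib sum_distrib_left sum_divide_distrib mult_ac)
  qed
  then have "(\<Sum>s\<in>A \<union> B. ?sw s * ln (1 - z s)) \<le> (\<Sum>s\<in>E. 1 / real (card E) * ln (1 - z s))"
    using AB z by (intro sum_ln_one_minus_le fin) auto
  then show ?thesis using average[OF AB weights(1)] average[OF order_refl weights(2)] by simp
qed

lemma binomial_mix_ElogZ_le:
  assumes vm: "valid_model M" and lam: "lam > 1" and N: "N1 \<ge> 1" "N2 \<ge> 1"
  defines "p \<equiv> real N1 / real (N1 + N2)" and "q \<equiv> real N2 / real (N1 + N2)"
  shows "(\<Sum>k\<le>m. real (m choose k) * (p^k * q^(m-k) * (ElogZ M lam N1 k + ElogZ M lam N2 (m-k))))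
    \<le> ElogZ M lam (N1 + N2) m"
proof -
  let ?A = "edge_set M {0..<N1}" and ?B = "edge_set M {N1..<N1 + N2}"
  let ?E = "edges M (N1 + N2)" and ?lnZ = "\<lambda>G. ln (partition_fn M lam (N1 + N2) G)"
  have E: "?E = edge_set M {0..<N1 + N2}" by (rule edges_eq_edge_set)
  have AB: "?A \<union> ?B \<subseteq> ?E" unfolding E by (intro Un_least edge_set_mono) auto
  have "seq_sum (?A \<union> ?B) (split_edge_weight M N1 N2) m ?lnZ
      \<le> seq_sum ?E (\<lambda>_. 1 / real (card ?E)) m ?lnZ"
  proof (rule seq_sum_exchange_mono)
    fix L assume "set L \<subseteq> ?E \<union> (?A \<union> ?B)"
    then show "(\<Sum>s\<in>?A \<union> ?B. split_edge_weight M N1 N2 s * ?lnZ (s # L))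
        \<le> (\<Sum>s\<in>?E. 1 / real (card ?E) * ?lnZ (s # L))"
      using AB unfolding E by (intro split_edge_exchange_le[OF vm lam N]) auto
  qed (auto simp: E finite_edge_set split_edge_weight_def partition_fn_rotate)
  then show ?thesis
    unfolding p_def q_def seq_sum_split_edge_ln_partition_fn[OF vm lam N]
    using ElogZ_eq_seq_sum[OF vm, of "N1 + N2" lam m] N by simp
qed

theorem theorem6:
  fixes M :: model and c lam :: real and N N1 N2 :: nat
  assumes "valid_model M" and "c > 0" and "lam > 1"
    and "1 \<le> N1" and "N1 \<le> N - 1" and "1 \<le> N2" and "N2 \<le> N - 1" and "N1 + N2 = N"
  shows "ElogZ M lam N (nat \<lfloor>c * real N\<rfloor>)
    \<ge> measure_pmf.expectation (binomial_pmf (nat \<lfloor>c * real N\<rfloor>) (real N1 / real N))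
          (\<lambda>m1. ElogZ M lam N1 m1)
      + measure_pmf.expectation (binomial_pmf (nat \<lfloor>c * real N\<rfloor>) (real N1 / real N))
          (\<lambda>m1. ElogZ M lam N2 (nat \<lfloor>c * real N\<rfloor> - m1))"
proof -
  define m where "m = nat \<lfloor>c * real N\<rfloor>"
  have p: "real N1 / real N \<in> {0..1}" using assms(4,8) by auto
  have q: "1 - real N1 / real N = real N2 / real N" using assms(4,8) by (simp add: field_simps)
  have "measure_pmf.expectation (binomial_pmf m (real N1 / real N)) (ElogZ M lam N1)
      + measure_pmf.expectation (binomial_pmf m (real N1 / real N)) (\<lambda>m1. ElogZ M lam N2 (m - m1))
      = (\<Sum>k\<le>m. real (m choose k) * ((real N1 / real N)^k * (real N2 / real N)^(m-k)
            * (ElogZ M lam N1 k + ElogZ M lam N2 (m-k))))"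
    unfolding expectation_binomial_pmf'[OF p] q by (simp add: sum.distrib[symmetric] algebra_simps)
  also have "\<dots> \<le> ElogZ M lam N m"
    using binomial_mix_ElogZ_le[OF assms(1,3,4,6)] assms(8) by simp
  finally show ?thesis unfolding m_def by simp
qed

end
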